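(* Let $d\ge 1$ and $n\ge 1$. For a sequence $w=(i_1,\dots,i_n)$ which is a permutation of $[n]$, let $M_w(f_1,\dots,f_n)=f_{i_1}\vartriangleleft(f_{i_2}\vartriangleleft(\cdots\vartriangleleft(f_{i_{n-1}}\vartriangleleft f_{i_n})\cdots))$ and let $\ell_w\in\mathrm{RT}(n)$ be the linear tree with root $i_1$ in which $i_{m+1}$ is the unique child of $i_m$ for $m<n$. Then $w\mapsto\ell_w$ is a bijection from permutations of $[n]$ onto the linear trees in $\mathrm{RT}(n)$, $F(\ell_w)(f_1,\dots,f_n)=M_w(f_1,\dots,f_n)$ for all $f_1,\dots,f_n\in\mathcal{C}_d$, and for every family of real coefficients $(\lambda_w)_w$, the expression $\sum_w\lambda_w M_w$ is a left identity of the Witt algebra $W_d$ (i.e. vanishes for all $f_1,\dots,f_n\in W_d$) if and only if $\sum_w\lambda_w F(\ell_w)=0$ as a map $\mathcal{C}_d^n\to\mathcal{C}_d$. Hence left identities of $W_d$ correspond one-to-one to linear relations among elementary differentials of linear trees.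
   Context: A rooted tree on a finite vertex set $V\subset\mathbb{N}$ is a set $E$ of ordered pairs (an edge $(v,w)$ means $w$ is a child of $v$) such that exactly one vertex (the root) has no parent, every other vertex has exactly one parent, and every vertex is connected to the root by following parents; it is linear if every vertex has at most one child. $\mathrm{RT}(n)$ is the set of rooted trees on $[n]$; $\tau_v$ is the subtree of $v$ and its descendants. $\mathcal{C}_d=C^\infty(\mathbb{R}^d,\mathbb{R}^d)$, $g_j$ the $j$-th coordinate, $\partial_j=\partial/\partial x_j$. For $\tau$ with root $r$ whose children are $v_1,\dots,v_k$, recursively $F(\tau)((f^i)_{i\in V})=\sum_{j_1,\dots,j_k=1}^d F(\tau_{v_1})(\cdots)_{j_1}\cdots F(\tau_{v_k})(\cdots)_{j_k}\,\partial_{j_1}\cdots\partial_{j_k}f^r$, where $F(\tau_{v_m})$ is evaluated on the $f^i$ with $i$ a vertex of $\tau_{v_m}$ (single vertex: $F(\tau)=f^r$). The Witt algebra $W_d$ is the space of polynomial maps $\mathbb{R}^d\to\mathbb{R}^d$ with product $f\vartriangleleft g=\sum_{i=1}^d g_i\,\partial_i f$ (the same formula defines $\vartriangleleft$ on $\mathcal{C}_d$). A left identity of arity $n$ is a linear combination of the multilinear expressions $M_w$ (all compositions in the right input) that vanishes identically on $W_d$. *)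

theory Defs
  imports "HOL-Analysis.Analysis" "HOL-Combinatorics.Multiset_Permutations"
begin

type_synonym 'd vf = "real^'d \<Rightarrow> real^'d"

text \<open>E is a set of ordered pairs (v,w) meaning w is a child of v.\<close>

definition is_tree_root :: "nat set \<Rightarrow> (nat \<times> nat) set \<Rightarrow> nat \<Rightarrow> bool" where
  "is_tree_root V E r \<longleftrightarrow> r \<in> V \<and> (\<forall>u. (u, r) \<notin> E)"

definition rooted_tree :: "nat set \<Rightarrow> (nat \<times> nat) set \<Rightarrow> bool" where
  "rooted_tree V E \<longleftrightarrow> finite V \<and> E \<subseteq> V \<times> V \<and>
     (\<exists>!r. is_tree_root V E r) \<and>
     (\<forall>v\<in>V. \<not> is_tree_root V E v \<longrightarrow> (\<exists>!u. (u, v) \<in> E)) \<and>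
     (\<forall>r. is_tree_root V E r \<longrightarrow> (\<forall>v\<in>V. (r, v) \<in> E\<^sup>*))"

definition tree_root :: "nat set \<Rightarrow> (nat \<times> nat) set \<Rightarrow> nat" where
  "tree_root V E = (THE r. is_tree_root V E r)"

definition RT :: "nat \<Rightarrow> (nat \<times> nat) set set" where
  "RT n = {E. rooted_tree {1..n} E}"

definition linear_tree :: "(nat \<times> nat) set \<Rightarrow> bool" where
  "linear_tree E \<longleftrightarrow> (\<forall>v w w'. (v, w) \<in> E \<longrightarrow> (v, w') \<in> E \<longrightarrow> w = w')"

definition children :: "(nat \<times> nat) set \<Rightarrow> nat \<Rightarrow> nat set" where
  "children E v = {w. (v, w) \<in> E}"

definition partial :: "'d::finite \<Rightarrow> (real^'d \<Rightarrow> 'a::real_normed_vector) \<Rightarrow> real^'d \<Rightarrow> 'a" where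
  "partial j g x = vector_derivative (\<lambda>t. g (x + t *\<^sub>R axis j 1)) (at 0)"

fun partials :: "'d::finite list \<Rightarrow> (real^'d \<Rightarrow> 'a::real_normed_vector) \<Rightarrow> real^'d \<Rightarrow> 'a" where
  "partials [] g = g"
| "partials (j # js) g = partial j (partials js g)"

definition smooth :: "'d::finite vf \<Rightarrow> bool" where
  "smooth g \<longleftrightarrow> (\<forall>js::'d list. continuous_on UNIV (partials js g) \<and>
      (\<forall>j x. ((\<lambda>t. partials js g (x + t *\<^sub>R axis j 1)) has_vector_derivative
               partials (j # js) g x) (at 0)))"

inductive poly_fun :: "(real^'d::finite \<Rightarrow> real) \<Rightarrow> bool" where
  pf_const: "poly_fun (\<lambda>x. c)"
| pf_coord: "poly_fun (\<lambda>x. x $ j)"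
| pf_add: "poly_fun p \<Longrightarrow> poly_fun q \<Longrightarrow> poly_fun (\<lambda>x. p x + q x)"
| pf_mult: "poly_fun p \<Longrightarrow> poly_fun q \<Longrightarrow> poly_fun (\<lambda>x. p x * q x)"

definition witt :: "'d::finite vf \<Rightarrow> bool" where
  "witt g \<longleftrightarrow> (\<forall>j. poly_fun (\<lambda>x. g x $ j))"

definition wprod :: "'d::finite vf \<Rightarrow> 'd vf \<Rightarrow> 'd vf" where
  "wprod f g = (\<lambda>x. \<Sum>i\<in>UNIV. g x $ i *\<^sub>R partial i f x)"

fun Mw :: "nat list \<Rightarrow> (nat \<Rightarrow> 'd::finite vf) \<Rightarrow> 'd vf" where
  "Mw [] f = (\<lambda>x. 0)"
| "Mw [i] f = f i"
| "Mw (i # j # ws) f = wprod (f i) (Mw (j # ws) f)"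

definition lin_tree :: "nat list \<Rightarrow> (nat \<times> nat) set" where
  "lin_tree w = {(w ! m, w ! (m + 1)) | m. m + 1 < length w}"

text \<open>Fh k E f v is F(\<tau>_v) evaluated at the family f, computed with recursion
  fuel k; the fuel is irrelevant once it exceeds the depth of \<tau>_v. The k-fold
  sum over (j_1,...,j_k) is a sum over maps J from the children to the index type;
  the partial derivatives are taken in the (sorted) order of the children.\<close>
fun Fh :: "nat \<Rightarrow> (nat \<times> nat) set \<Rightarrow> (nat \<Rightarrow> 'd::finite vf) \<Rightarrow> nat \<Rightarrow> 'd vf" where
  "Fh 0 E f v = f v"
| "Fh (Suc k) E f v = (\<lambda>x.
     \<Sum>J\<in>PiE (children E v) (\<lambda>_. UNIV).
       (\<Prod>c\<in>children E v. Fh k E f c x $ J c) *\<^sub>R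
       partials (map J (sorted_list_of_set (children E v))) (f v) x)"

definition elem_diff :: "nat set \<Rightarrow> (nat \<times> nat) set \<Rightarrow> (nat \<Rightarrow> 'd::finite vf) \<Rightarrow> 'd vf" where
  "elem_diff V E f = Fh (card V) E f (tree_root V E)"

definition left_identity :: "nat \<Rightarrow> (nat list \<Rightarrow> real) \<Rightarrow> 'd::finite itself \<Rightarrow> bool" where
  "left_identity n lam TYPE('d) \<longleftrightarrow>
     (\<forall>f :: nat \<Rightarrow> 'd vf. (\<forall>i\<in>{1..n}. witt (f i)) \<longrightarrow>
        (\<forall>x. (\<Sum>w\<in>permutations_of_set {1..n}. lam w *\<^sub>R Mw w f x) = 0))"

end

theory Submission
  imports Defs
begin

(* A linear rooted tree is a path: deleting its root leaves a linear rooted tree on the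
   remaining vertices whose root is the old root's only child, so by induction on the number
   of vertices every linear tree is the tree of exactly one word. Along such a path every
   vertex has at most one child, so the recursion defining F(l_w) collapses to the nested
   product M_w. Finally M_w(f)(x) depends only on the values and first partial derivatives
   of the f_i at x; replacing each f_i by the affine field with the same first-order jet at x,
   which is polynomial and smooth at the same time, shows that a combination of the M_w
   vanishes on W_d iff it vanishes on all of C_d. *)

lemma mem_lin_tree_iff:
  "(a, b) \<in> lin_tree w \<longleftrightarrow> (\<exists>m. m + 1 < length w \<and> a = w ! m \<and> b = w ! (m + 1))"
  unfolding lin_tree_def by auto

lemma lin_tree_Cons:
  assumes "w \<noteq> []"
  shows "lin_tree (a # w) = insert (a, hd w) (lin_tree w)"
proof (intro set_eqI iffI)
  fix e assume "e \<in> lin_tree (a # w)"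
  then obtain m where "m + 1 < Suc (length w)" "e = ((a # w) ! m, (a # w) ! (m + 1))"
    unfolding lin_tree_def by auto
  then show "e \<in> insert (a, hd w) (lin_tree w)"
    using assms by (cases m) (auto simp: lin_tree_def hd_conv_nth)
next
  fix e assume "e \<in> insert (a, hd w) (lin_tree w)"
  then show "e \<in> lin_tree (a # w)"
  proof
    assume "e = (a, hd w)"
    then show ?thesis using assms by (auto simp: lin_tree_def hd_conv_nth intro!: exI[of _ 0])
  next
    assume "e \<in> lin_tree w"
    then obtain m where "m + 1 < length w" "e = (w ! m, w ! (m + 1))"
      unfolding lin_tree_def by auto
    then show ?thesis unfolding lin_tree_def by (auto intro!: exI[of _ "Suc m"])
  qed
qed

lemma lin_tree_parent_iff:
  assumes "distinct w" "k < length w"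
  shows "(u, w ! k) \<in> lin_tree w \<longleftrightarrow> k \<noteq> 0 \<and> u = w ! (k - 1)"
  using assms by (auto simp: mem_lin_tree_iff nth_eq_iff_index_eq intro: exI[of _ "k - 1"])

lemma children_lin_tree:
  assumes "distinct w" "m < length w"
  shows "children (lin_tree w) (w ! m) = (if m + 1 < length w then {w ! (m + 1)} else {})"
proof -
  have "(w ! m, c) \<in> lin_tree w \<longleftrightarrow> m + 1 < length w \<and> c = w ! (m + 1)" for c
    using assms by (auto simp: mem_lin_tree_iff nth_eq_iff_index_eq)
  then show ?thesis unfolding children_def by auto
qed

lemma is_tree_root_lin_tree:
  assumes "distinct w" "w \<noteq> []"
  shows "is_tree_root (set w) (lin_tree w) r \<longleftrightarrow> r = hd w"
proof
  assume root: "is_tree_root (set w) (lin_tree w) r"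
  then obtain k where k: "k < length w" "r = w ! k"
    unfolding is_tree_root_def by (metis in_set_conv_nth)
  then have "k = 0"
    using root lin_tree_parent_iff[OF assms(1) k(1)] unfolding is_tree_root_def by blast
  then show "r = hd w"
    using k assms(2) by (simp add: hd_conv_nth)
next
  assume "r = hd w"
  then show "is_tree_root (set w) (lin_tree w) r"
    using assms lin_tree_parent_iff[OF assms(1), of 0] unfolding is_tree_root_def
    by (simp add: hd_conv_nth)
qed

lemma tree_root_lin_tree:
  assumes "distinct w" "w \<noteq> []"
  shows "tree_root (set w) (lin_tree w) = hd w"
  unfolding tree_root_def by (rule the_equality) (simp_all add: is_tree_root_lin_tree[OF assms])

lemma linear_tree_lin_tree:
  assumes "distinct w"
  shows "linear_tree (lin_tree w)"
  using assms unfolding linear_tree_def by (auto simp: mem_lin_tree_iff nth_eq_iff_index_eq)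

lemma rooted_tree_lin_tree:
  assumes "distinct w" "w \<noteq> []"
  shows "rooted_tree (set w) (lin_tree w)"
proof -
  note root = is_tree_root_lin_tree[OF assms]
  have parent: "\<exists>!u. (u, v) \<in> lin_tree w" if v: "v \<in> set w" "v \<noteq> hd w" for v
  proof -
    obtain k where k: "k < length w" "v = w ! k"
      using v(1) by (metis in_set_conv_nth)
    then have "k \<noteq> 0"
      using v(2) assms(2) by (metis hd_conv_nth)
    then show ?thesis
      using lin_tree_parent_iff[OF assms(1) k(1)] k(2) by simp
  qed
  have reach: "(hd w, w ! k) \<in> (lin_tree w)\<^sup>*" if "k < length w" for k
    using that
  proof (induction k)
    case 0
    then show ?case by (simp add: hd_conv_nth)
  next
    case (Suc k)
    then have "(w ! k, w ! Suc k) \<in> lin_tree w"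
      by (auto simp: mem_lin_tree_iff)
    with Suc show ?case by (meson Suc_lessD rtrancl.rtrancl_into_rtrancl)
  qed
  show ?thesis
    unfolding rooted_tree_def
  proof (intro conjI allI impI ballI)
    show "lin_tree w \<subseteq> set w \<times> set w"
      by (auto simp: lin_tree_def)
    show "\<exists>!r. is_tree_root (set w) (lin_tree w) r"
      by (simp add: root)
    show "\<exists>!u. (u, v) \<in> lin_tree w"
      if "v \<in> set w" "\<not> is_tree_root (set w) (lin_tree w) v" for v
      using that parent by (simp add: root)
    show "(r, v) \<in> (lin_tree w)\<^sup>*"
      if "is_tree_root (set w) (lin_tree w) r" "v \<in> set w" for r v
      using that reach by (auto simp: root in_set_conv_nth)
  qed simp
qed

lemma inj_on_lin_tree: "inj_on lin_tree (permutations_of_set V)"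
proof (rule inj_onI)
  fix w v assume "w \<in> permutations_of_set V" "v \<in> permutations_of_set V"
    and same: "lin_tree w = lin_tree v"
  then have w: "distinct w" "set w = V" and v: "distinct v" "set v = V"
    by (auto simp: permutations_of_set_def)
  then have len: "length w = length v"
    by (metis distinct_card)
  show "w = v"
  proof (cases "w = []")
    case False
    then have "v \<noteq> []" using w v by auto
    have "w ! k = v ! k" if "k < length w" for k
      using that
    proof (induction k)
      case 0
      have "hd w = hd v"
        using is_tree_root_lin_tree[OF w(1) \<open>w \<noteq> []\<close>] is_tree_root_lin_tree[OF v(1) \<open>v \<noteq> []\<close>]
        by (simp add: w(2) v(2) same) blast
      then show ?case
        using \<open>w \<noteq> []\<close> \<open>v \<noteq> []\<close> by (simp add: hd_conv_nth)
    next
      case (Suc k)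
      then have "children (lin_tree w) (w ! k) = children (lin_tree v) (v ! k)"
        by (simp add: same)
      then show ?case
        using children_lin_tree[OF w(1), of k] children_lin_tree[OF v(1), of k] Suc.prems len
        by simp
    qed
    then show ?thesis using len by (intro nth_equalityI) auto
  qed (use len in simp)
qed

lemma rooted_tree_unique_root:
  assumes "rooted_tree V E" "is_tree_root V E r" "is_tree_root V E r'"
  shows "r = r'"
  using assms unfolding rooted_tree_def by blast

lemma rooted_tree_ex1_parent:
  assumes "rooted_tree V E" "is_tree_root V E r" "v \<in> V" "v \<noteq> r"
  shows "\<exists>!u. (u, v) \<in> E"
  using assms rooted_tree_unique_root[OF assms(1,2), of v] unfolding rooted_tree_def by blast

lemma rooted_tree_singleton:
  assumes "rooted_tree {r} E"
  shows "E = {}"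
proof -
  have "E \<subseteq> {(r, r)}" using assms unfolding rooted_tree_def by auto
  moreover have "(r, r) \<notin> E"
    using assms unfolding rooted_tree_def is_tree_root_def by auto
  ultimately show ?thesis by auto
qed

lemma rooted_tree_root_has_child:
  assumes "rooted_tree V E" "is_tree_root V E r" "V \<noteq> {r}"
  obtains c where "(r, c) \<in> E"
proof -
  obtain v where "v \<in> V" "v \<noteq> r"
    using assms(2,3) unfolding is_tree_root_def by blast
  moreover have "(r, v) \<in> E\<^sup>*"
    using assms(1,2) \<open>v \<in> V\<close> unfolding rooted_tree_def by blast
  ultimately show ?thesis
    using that by (metis converse_rtranclE)
qed

lemma rtrancl_Diff_edge_out_of_parentless:
  assumes "(c, v) \<in> E\<^sup>*" "c \<noteq> r" "\<And>u. (u, r) \<notin> E"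
  shows "(c, v) \<in> (E - {(r, d)})\<^sup>*"
  using assms(1)
proof (induction rule: rtrancl_induct)
  case (step y z)
  from step.hyps(1) have "y = c \<or> (\<exists>u. (u, y) \<in> E)"
    by (cases rule: rtranclE) auto
  then have "y \<noteq> r"
    using assms(2,3) by auto
  with step.hyps(2) have "(y, z) \<in> E - {(r, d)}"
    by auto
  with step.IH show ?case
    by (rule rtrancl_into_rtrancl)
qed simp

lemma is_tree_root_delete_root_iff:
  assumes tree: "rooted_tree V E" and root: "is_tree_root V E r" and edge: "(r, c) \<in> E"
  shows "is_tree_root (V - {r}) (E - {(r, c)}) v \<longleftrightarrow> v = c"
proof
  assume "is_tree_root (V - {r}) (E - {(r, c)}) v"
  then have "v \<in> V" "v \<noteq> r" "\<And>u. (u, v) \<in> E \<Longrightarrow> (u, v) = (r, c)"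
    unfolding is_tree_root_def by auto
  then show "v = c"
    using rooted_tree_ex1_parent[OF tree root] by blast
next
  assume "v = c"
  moreover have "c \<in> V" "c \<noteq> r"
    using tree root edge unfolding rooted_tree_def is_tree_root_def by auto
  ultimately show "is_tree_root (V - {r}) (E - {(r, c)}) v"
    using rooted_tree_ex1_parent[OF tree root, of c] edge unfolding is_tree_root_def by auto
qed

lemma rooted_tree_delete_root:
  assumes tree: "rooted_tree V E" and lin: "linear_tree E"
    and root: "is_tree_root V E r" and edge: "(r, c) \<in> E"
  shows "rooted_tree (V - {r}) (E - {(r, c)})"
proof -
  let ?V = "V - {r}" and ?E = "E - {(r, c)}"
  note new_root = is_tree_root_delete_root_iff[OF tree root edge]
  have edges: "E \<subseteq> V \<times> V" and no_parent_r: "\<And>u. (u, r) \<notin> E"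
    using tree root unfolding rooted_tree_def is_tree_root_def by auto
  have new_edges: "?E \<subseteq> ?V \<times> ?V"
  proof (rule subrelI)
    fix u v assume e: "(u, v) \<in> ?E"
    have "u \<noteq> r"
      using lin edge e unfolding linear_tree_def by blast
    moreover have "v \<noteq> r"
      using no_parent_r e by blast
    ultimately show "(u, v) \<in> ?V \<times> ?V"
      using edges e by auto
  qed
  have reach: "(c, v) \<in> ?E\<^sup>*" if "v \<in> ?V" for v
  proof -
    have "(r, v) \<in> E\<^sup>*" "v \<noteq> r"
      using tree root that unfolding rooted_tree_def by auto
    then obtain c' where "(r, c') \<in> E" "(c', v) \<in> E\<^sup>*"
      by (metis converse_rtranclE)
    moreover have "c' = c"
      using lin edge calculation(1) unfolding linear_tree_def by blast
    moreover have "c \<noteq> r"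
      using edge no_parent_r by blast
    ultimately show ?thesis
      using rtrancl_Diff_edge_out_of_parentless[of c v E r c] no_parent_r by simp
  qed
  show ?thesis
    unfolding rooted_tree_def
  proof (intro conjI allI impI ballI)
    show "\<exists>!u. (u, v) \<in> ?E" if "v \<in> ?V" "\<not> is_tree_root ?V ?E v" for v
      using that new_root rooted_tree_ex1_parent[OF tree root, of v] by auto
    show "(r', v) \<in> ?E\<^sup>*" if "is_tree_root ?V ?E r'" "v \<in> ?V" for r' v
      using that new_root reach by simp
  qed (use tree new_edges new_root in \<open>auto simp: rooted_tree_def\<close>)
qed

lemma linear_rooted_tree_is_lin_tree:
  assumes "rooted_tree V E" "linear_tree E"
  shows "\<exists>w. distinct w \<and> set w = V \<and> E = lin_tree w"
  using assms
proof (induction "card V" arbitrary: V E rule: less_induct)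
  case less
  note tree = less.prems(1) and lin = less.prems(2)
  obtain r where root: "is_tree_root V E r"
    using tree unfolding rooted_tree_def by blast
  have "finite V" "r \<in> V"
    using tree root unfolding rooted_tree_def is_tree_root_def by auto
  show ?case
  proof (cases "V = {r}")
    case True
    then have "E = {}"
      using rooted_tree_singleton tree by simp
    then show ?thesis
      using True by (intro exI[of _ "[r]"]) (simp add: lin_tree_def)
  next
    case False
    then obtain c where edge: "(r, c) \<in> E"
      using rooted_tree_root_has_child tree root by blast
    have "card (V - {r}) < card V"
      using \<open>finite V\<close> \<open>r \<in> V\<close> by (rule card_Diff1_less)
    moreover have "linear_tree (E - {(r, c)})"
      using lin unfolding linear_tree_def by blast
    ultimately obtain w where w: "distinct w" "set w = V - {r}" "E - {(r, c)} = lin_tree w"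
      using less.hyps rooted_tree_delete_root[OF tree lin root edge] by blast
    have c_root: "is_tree_root (set w) (lin_tree w) c"
      using is_tree_root_delete_root_iff[OF tree root edge] w(2,3) by simp
    then have "w \<noteq> []"
      unfolding is_tree_root_def by auto
    with c_root have "hd w = c"
      using is_tree_root_lin_tree[OF w(1)] by simp
    then have "lin_tree (r # w) = E"
      using lin_tree_Cons[OF \<open>w \<noteq> []\<close>] w(3) edge by auto
    moreover have "distinct (r # w)" "set (r # w) = V"
      using w(1,2) \<open>r \<in> V\<close> by auto
    ultimately show ?thesis by metis
  qed
qed

lemma bij_betw_lin_tree:
  assumes "V \<noteq> {}"
  shows "bij_betw lin_tree (permutations_of_set V) {E. rooted_tree V E \<and> linear_tree E}"
  unfolding bij_betw_def
proof
  show "inj_on lin_tree (permutations_of_set V)"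
    by (rule inj_on_lin_tree)
  show "lin_tree ` permutations_of_set V = {E. rooted_tree V E \<and> linear_tree E}"
  proof (intro equalityI subsetI)
    fix E assume "E \<in> lin_tree ` permutations_of_set V"
    then obtain w where "distinct w" "set w = V" "E = lin_tree w"
      by (auto simp: permutations_of_set_def)
    moreover have "w \<noteq> []"
      using assms calculation(2) by auto
    ultimately show "E \<in> {E. rooted_tree V E \<and> linear_tree E}"
      using rooted_tree_lin_tree linear_tree_lin_tree by auto
  next
    fix E assume "E \<in> {E. rooted_tree V E \<and> linear_tree E}"
    then obtain w where "distinct w" "set w = V" "E = lin_tree w"
      using linear_rooted_tree_is_lin_tree by blast
    then show "E \<in> lin_tree ` permutations_of_set V"
      by (auto simp: permutations_of_set_def)
  qed
qed

lemma sum_PiE_singleton: "(\<Sum>J\<in>PiE {c} (\<lambda>_. A). g J) = (\<Sum>a\<in>A. g (\<lambda>_\<in>{c}. a))"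
  by (rule sum.reindex_bij_witness[of _ "\<lambda>a. \<lambda>_\<in>{c}. a" "\<lambda>J. J c"])
    (auto simp: PiE_iff extensional_def intro!: arg_cong[where f = g] ext)

lemma Fh_lin_tree:
  assumes "distinct w" "m < length w" "length w \<le> m + k + 1"
  shows "Fh k (lin_tree w) f (w ! m) = Mw (drop m w) f"
  using assms(2,3)
proof (induction k arbitrary: m)
  case 0
  then have "drop m w = [w ! m]"
    by (simp add: Cons_nth_drop_Suc[symmetric])
  then show ?case by simp
next
  case (Suc k)
  have drop_m: "drop m w = w ! m # drop (m + 1) w"
    using Suc.prems(1) by (simp add: Cons_nth_drop_Suc)
  show ?case
  proof (cases "m + 1 < length w")
    case False
    moreover have "children (lin_tree w) (w ! m) = {}"
      using children_lin_tree[OF assms(1) Suc.prems(1)] False by simp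
    ultimately show ?thesis
      using drop_m by simp
  next
    case True
    have "drop (m + 1) w = w ! (m + 1) # drop (m + 2) w"
      using True by (simp add: Cons_nth_drop_Suc)
    moreover have "Fh k (lin_tree w) f (w ! (m + 1)) = Mw (drop (m + 1) w) f"
      using Suc.IH[of "m + 1"] True Suc.prems(2) by simp
    moreover have "children (lin_tree w) (w ! m) = {w ! (m + 1)}"
      using children_lin_tree[OF assms(1) Suc.prems(1)] True by simp
    ultimately show ?thesis
      using drop_m by (simp add: fun_eq_iff wprod_def sum_PiE_singleton)
  qed
qed

lemma elem_diff_lin_tree:
  assumes "distinct w" "w \<noteq> []"
  shows "elem_diff (set w) (lin_tree w) f = Mw w f"
  using Fh_lin_tree[OF assms(1), of 0 "length w"] assms
  by (simp add: elem_diff_def tree_root_lin_tree distinct_card hd_conv_nth)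

(* Value a and partial derivatives c j at x; being both polynomial and smooth, these fields
   are test functions for W_d and for C^\<infinity> alike. *)
definition affine_field :: "real^'d::finite \<Rightarrow> real^'d \<Rightarrow> ('d \<Rightarrow> real^'d) \<Rightarrow> 'd vf" where
  "affine_field x a c = (\<lambda>y. a + (\<Sum>k\<in>UNIV. (y $ k - x $ k) *\<^sub>R c k))"

lemma affine_field_at_base: "affine_field x a c x = a"
  by (simp add: affine_field_def)

lemma affine_field_along_axis:
  "affine_field x a c (y + t *\<^sub>R axis j 1) = affine_field x a c y + t *\<^sub>R c j"
proof -
  have "(\<Sum>k\<in>UNIV. ((y + t *\<^sub>R axis j 1) $ k - x $ k) *\<^sub>R c k)
      = (\<Sum>k\<in>UNIV. (y $ k - x $ k) *\<^sub>R c k + (if k = j then t *\<^sub>R c k else 0))"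
    by (rule sum.cong) (auto simp: axis_def algebra_simps)
  also have "\<dots> = (\<Sum>k\<in>UNIV. (y $ k - x $ k) *\<^sub>R c k) + t *\<^sub>R c j"
    by (simp add: sum.distrib)
  finally show ?thesis
    unfolding affine_field_def by (simp add: algebra_simps)
qed

lemma affine_field_has_vector_derivative:
  "((\<lambda>t. affine_field x a c (y + t *\<^sub>R axis j 1)) has_vector_derivative c j) (at 0)"
  unfolding affine_field_along_axis by (auto intro!: derivative_eq_intros)

lemma partial_affine_field: "partial j (affine_field x a c) = affine_field x (c j) (\<lambda>_. 0)"
proof
  fix y
  have "partial j (affine_field x a c) y = c j"
    unfolding partial_def by (rule vector_derivative_at[OF affine_field_has_vector_derivative])
  then show "partial j (affine_field x a c) y = affine_field x (c j) (\<lambda>_. 0) y"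
    by (simp add: affine_field_def)
qed

lemma partials_affine_field: "\<exists>a' c'. partials js (affine_field x a c) = affine_field x a' c'"
proof (induction js)
  case (Cons j js)
  then obtain a' c' where "partials js (affine_field x a c) = affine_field x a' c'"
    by blast
  then have "partials (j # js) (affine_field x a c) = affine_field x (c' j) (\<lambda>_. 0)"
    by (simp add: partial_affine_field)
  then show ?case by blast
qed auto

lemma smooth_affine_field: "smooth (affine_field x a c)"
  unfolding smooth_def
proof (intro allI conjI)
  fix js j y
  obtain a' c' where js: "partials js (affine_field x a c) = affine_field x a' c'"
    using partials_affine_field by blast
  show "continuous_on UNIV (partials js (affine_field x a c))"
    unfolding js unfolding affine_field_def by (intro continuous_intros)
  have "partials (j # js) (affine_field x a c) y = c' j"
    unfolding partials.simps js partial_affine_field by (simp add: affine_field_def)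
  then show "((\<lambda>t. partials js (affine_field x a c) (y + t *\<^sub>R axis j 1)) has_vector_derivative
      partials (j # js) (affine_field x a c) y) (at 0)"
    unfolding js using affine_field_has_vector_derivative by simp
qed

lemma poly_fun_sum:
  assumes "finite I" "\<And>i. i \<in> I \<Longrightarrow> poly_fun (p i)"
  shows "poly_fun (\<lambda>x. \<Sum>i\<in>I. p i x)"
  using assms by (induction I rule: finite_induct) (auto intro: pf_const pf_add)

lemma witt_affine_field: "witt (affine_field x a c)"
  unfolding witt_def
proof
  fix k
  have "poly_fun (\<lambda>y. a $ k + (\<Sum>i\<in>UNIV. y $ i * c i $ k + - (x $ i * c i $ k)))"
    by (intro pf_add pf_const poly_fun_sum pf_mult pf_coord) auto
  then show "poly_fun (\<lambda>y. affine_field x a c y $ k)"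
    by (simp add: affine_field_def sum_component algebra_simps)
qed

(* wprod differentiates its left factor once and its right factor not at all, so only
   values and first partial derivatives at x enter. *)
lemma Mw_cong_first_order:
  assumes "\<And>i. f i x = g i x" "\<And>i j. partial j (f i) x = partial j (g i) x"
  shows "Mw w f x = Mw w g x"
  by (induction w rule: induct_list012) (simp_all add: assms wprod_def)

lemma Mw_eq_Mw_affine_fields:
  "Mw w f x = Mw w (\<lambda>i. affine_field x (f i x) (\<lambda>j. partial j (f i) x)) x"
  by (rule Mw_cong_first_order) (simp_all add: affine_field_at_base partial_affine_field)

lemma Mw_combination_vanishes_iff:
  fixes Q :: "'d::finite vf \<Rightarrow> bool"
  assumes "\<And>x a c. Q (affine_field x a c)"
  shows "(\<forall>f. (\<forall>i\<in>I. Q (f i)) \<longrightarrow> (\<forall>x. (\<Sum>w\<in>P. lam w *\<^sub>R Mw w f x) = 0))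
    \<longleftrightarrow> (\<forall>(f :: nat \<Rightarrow> 'd vf) x. (\<Sum>w\<in>P. lam w *\<^sub>R Mw w f x) = 0)"
proof
  assume vanish: "\<forall>f. (\<forall>i\<in>I. Q (f i)) \<longrightarrow> (\<forall>x. (\<Sum>w\<in>P. lam w *\<^sub>R Mw w f x) = 0)"
  show "\<forall>(f :: nat \<Rightarrow> 'd vf) x. (\<Sum>w\<in>P. lam w *\<^sub>R Mw w f x) = 0"
  proof (intro allI)
    fix f :: "nat \<Rightarrow> 'd vf" and x
    let ?g = "\<lambda>i. affine_field x (f i x) (\<lambda>j. partial j (f i) x)"
    have "\<forall>i\<in>I. Q (?g i)"
      using assms by blast
    then have "(\<Sum>w\<in>P. lam w *\<^sub>R Mw w ?g x) = 0"
      using mp[OF spec[OF vanish, of ?g]] by blast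
    then show "(\<Sum>w\<in>P. lam w *\<^sub>R Mw w f x) = 0"
      by (simp add: Mw_eq_Mw_affine_fields[of _ f x])
  qed
qed auto

theorem proposition4p5:
  fixes n :: nat
  assumes "n \<ge> 1"
  shows "bij_betw lin_tree (permutations_of_set {1..n}) {E \<in> RT n. linear_tree E}
    \<and> (\<forall>w\<in>permutations_of_set {1..n}. \<forall>f :: nat \<Rightarrow> 'd::finite vf.
          (\<forall>i\<in>{1..n}. smooth (f i)) \<longrightarrow> elem_diff {1..n} (lin_tree w) f = Mw w f)
    \<and> (\<forall>lam :: nat list \<Rightarrow> real.
          left_identity n lam TYPE('d) \<longleftrightarrow>
          (\<forall>f :: nat \<Rightarrow> 'd vf. (\<forall>i\<in>{1..n}. smooth (f i)) \<longrightarrow>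
             (\<forall>x. (\<Sum>w\<in>permutations_of_set {1..n}.
                     lam w *\<^sub>R elem_diff {1..n} (lin_tree w) f x) = 0)))"
proof -
  let ?P = "permutations_of_set {1..n}"
  have elem_diff: "elem_diff {1..n} (lin_tree w) f = Mw w f"
    if "w \<in> ?P" for w and f :: "nat \<Rightarrow> 'd vf"
  proof -
    have "distinct w" "set w = {1..n}" "w \<noteq> []"
      using that assms by (auto simp: permutations_of_set_def)
    then show ?thesis
      using elem_diff_lin_tree[of w f] by simp
  qed
  have sum_elem_diff: "(\<Sum>w\<in>?P. lam w *\<^sub>R elem_diff {1..n} (lin_tree w) f x)
      = (\<Sum>w\<in>?P. lam w *\<^sub>R Mw w f x)" for lam and f :: "nat \<Rightarrow> 'd vf" and x
    by (rule sum.cong[OF refl]) (simp only: elem_diff)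
  have left_identity_iff: "left_identity n lam TYPE('d) \<longleftrightarrow>
      (\<forall>f :: nat \<Rightarrow> 'd vf. (\<forall>i\<in>{1..n}. smooth (f i)) \<longrightarrow>
        (\<forall>x. (\<Sum>w\<in>?P. lam w *\<^sub>R Mw w f x) = 0))" for lam
    unfolding left_identity_def
    by (simp only: Mw_combination_vanishes_iff[of witt, OF witt_affine_field]
        Mw_combination_vanishes_iff[of smooth, OF smooth_affine_field])
  have "bij_betw lin_tree ?P {E \<in> RT n. linear_tree E}"
    using bij_betw_lin_tree[of "{1..n}"] assms by (simp add: RT_def)
  then show ?thesis
    using elem_diff left_identity_iff by (simp add: sum_elem_diff)
qed

end
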